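(* Let $\Psi$ be proper closed convex, $F=\frac1n\sum_{i=1}^nF_i$ with $F_i(x)=\mathbb{E}_{\xi_i\sim\mathcal{D}_i}[F_{\xi_i}(x)]$, and $x^*$ a solution of $\langle F(x^* ),x-x^*\rangle+\Psi(x)-\Psi(x^* )\ge0$ for all $x$. Let $K\ge0$, $\beta\in(0,1]$, $0<\gamma\le1/\ell$, $V\ge\|x^0-x^*\|^2+\frac{25600\gamma^2\ln^2\frac{48n(K+1)}{\beta}}{n^2}\sum_{i=1}^n\|F_i(x^* )\|^2$, $Q=B_{3\sqrt V}(x^* )$, and assume: $F$ is monotone on $Q$; for every solution $x^*$, $\|F_i(x)-F_i(x^* )\|^2\le\ell\langle F_i(x)-F_i(x^* ),x-x^*\rangle$ for $x\in Q$, $i\in[n]$; and $\|F(x)-F(y)\|^2\le\ell\langle F(x)-F(y),x-y\rangle$ for $x,y\in Q$. Consider DProx-clipped-SGDA-shift (arbitrary $h_i^0,\nu,\lambda_k$). If $x^k\in B_{3\sqrt V}(x^* )$ for all $k=0,1,\dots,K-1$, then for all $u\in B_{3\sqrt V}(x^* )$ $$\langle F(u),x^K_{\mathrm{avg}}-u\rangle+\Psi(x^K_{\mathrm{avg}})-\Psi(u)\le\frac{\|x^0-u\|^2-\|x^K-u\|^2}{2\gamma K}+\frac\gamma K\sum_{k=0}^{K-1}\|\omega_k\|^2+\frac1K\sum_{k=0}^{K-1}\langle x^k-u,\omega_k\rangle,$$ where $x^K_{\mathrm{avg}}=\frac1K\sum_{k=0}^{K-1}x^{k+1}$ and $\omega_k=F(x^k)-\tilde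 g^k$.
   Context: $\mathrm{prox}_{\gamma\Psi}(x)=\arg\min_y\{\gamma\Psi(y)+\frac12\|y-x\|^2\}$; $\mathrm{clip}(y,\lambda)=\min\{1,\lambda/\|y\|\}y$ ($\mathrm{clip}(0,\lambda)=0$). DProx-clipped-SGDA-shift: $x^{k+1}=\mathrm{prox}_{\gamma\Psi}(x^k-\gamma\tilde g^k)$, $\tilde g^k=\frac1n\sum_i\tilde g_i^k$, $\tilde g_i^k=h_i^k+\hat\Delta_i^k$, $h_i^{k+1}=h_i^k+\nu\hat\Delta_i^k$, $\hat\Delta_i^k=\mathrm{clip}(F_{\xi_i^k}(x^k)-h_i^k,\lambda_k)$, with $\xi_i^k$ sampled independently. *)

theory Defs
  imports "HOL-Probability.Probability"
begin

definition proper_closed_convex :: "('a::real_normed_vector \<Rightarrow> ereal) \<Rightarrow> bool" where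
  "proper_closed_convex \<Psi> \<longleftrightarrow>
     (\<forall>x. \<Psi> x \<noteq> -\<infinity>) \<and> (\<exists>x. \<Psi> x < \<infinity>) \<and>
     convex {(x, t::real). \<Psi> x \<le> ereal t} \<and>
     closed {(x, t::real). \<Psi> x \<le> ereal t}"

definition prox_set :: "real \<Rightarrow> ('a::real_normed_vector \<Rightarrow> ereal) \<Rightarrow> 'a \<Rightarrow> 'a set" where
  "prox_set \<gamma> \<Psi> z = {p. \<forall>y. ereal \<gamma> * \<Psi> p + ereal ((norm (p - z))\<^sup>2 / 2)
                             \<le> ereal \<gamma> * \<Psi> y + ereal ((norm (y - z))\<^sup>2 / 2)}"

definition clip :: "'a::real_normed_vector \<Rightarrow> real \<Rightarrow> 'a" where
  "clip y r = (if y = 0 then 0 else min 1 (r / norm y) *\<^sub>R y)"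

definition is_solution :: "('a::real_inner \<Rightarrow> 'a) \<Rightarrow> ('a \<Rightarrow> ereal) \<Rightarrow> 'a \<Rightarrow> bool" where
  "is_solution F \<Psi> xs \<longleftrightarrow> \<Psi> xs < \<infinity> \<and>
     (\<forall>x. ereal (inner (F xs) (x - xs)) + \<Psi> x - \<Psi> xs \<ge> 0)"

end

theory Submission
  imports Defs
begin

(* The prox step is the optimality condition
   gamma (Psi x(k+1) - Psi u) <= <x(k+1) - x k + gamma g k, u - x(k+1)>,
   obtained by moving the minimiser a little towards u.  Writing g k = F (x k) - omega k,
   expanding the inner products and applying Young's inequality to the cross term, the
   remaining term <F (x k) - F u, x k - u> absorbs gamma |F (x k) - F u|^2 by cocoercivity
   and gamma <= 1/ell.  Summing over k telescopes |x k - u|^2, and Jensen's inequality for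
   the convex Psi bounds Psi at the average by the average of the Psi (x (k+1)). *)

lemma convex_epigraphD:
  fixes \<Psi> :: "'a::real_vector \<Rightarrow> ereal"
  assumes cvx: "convex {(x, t::real). \<Psi> x \<le> ereal t}"
    and "\<Psi> a \<le> ereal s" "\<Psi> b \<le> ereal t" "0 \<le> \<theta>" "\<theta> \<le> 1"
  shows "\<Psi> ((1 - \<theta>) *\<^sub>R a + \<theta> *\<^sub>R b) \<le> ereal ((1 - \<theta>) * s + \<theta> * t)"
proof -
  have "(1 - \<theta>) *\<^sub>R (a, s) + \<theta> *\<^sub>R (b, t) \<in> {(x, t::real). \<Psi> x \<le> ereal t}"
    by (rule convexD[OF cvx]) (use assms in auto)
  then show ?thesis by simp
qed

lemma convex_epigraph_sum:
  fixes \<Psi> :: "'a::real_vector \<Rightarrow> ereal"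
  assumes cvx: "convex {(x, t::real). \<Psi> x \<le> ereal t}"
    and "finite I" "sum w I = 1" "\<And>i. i \<in> I \<Longrightarrow> 0 \<le> w i"
    and "\<And>i. i \<in> I \<Longrightarrow> \<Psi> (y i) \<le> ereal (t i)"
  shows "\<Psi> (\<Sum>i\<in>I. w i *\<^sub>R y i) \<le> ereal (\<Sum>i\<in>I. w i * t i)"
proof -
  have "(\<Sum>i\<in>I. w i *\<^sub>R (y i, t i)) \<in> {(x, t::real). \<Psi> x \<le> ereal t}"
    by (rule convex_sum[OF _ cvx]) (use assms in auto)
  moreover have "(\<Sum>i\<in>I. w i *\<^sub>R (y i, t i)) = (\<Sum>i\<in>I. w i *\<^sub>R y i, \<Sum>i\<in>I. w i * t i)"
    by (simp add: prod_eq_iff fst_sum snd_sum)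
  ultimately show ?thesis by simp
qed

lemma prox_set_less_infinity:
  assumes "\<And>v. \<Psi> v \<noteq> -\<infinity>" "\<Psi> y < \<infinity>" "\<gamma> > 0" "p \<in> prox_set \<gamma> \<Psi> z"
  shows "\<Psi> p < \<infinity>"
proof -
  have "ereal \<gamma> * \<Psi> p + ereal ((norm (p - z))\<^sup>2 / 2)
      \<le> ereal \<gamma> * \<Psi> y + ereal ((norm (y - z))\<^sup>2 / 2)"
    using assms(4) unfolding prox_set_def by blast
  moreover have "ereal \<gamma> * \<Psi> y + ereal ((norm (y - z))\<^sup>2 / 2) < \<infinity>"
    using assms(1-3) by (cases "\<Psi> y") auto
  ultimately show ?thesis
    using assms(3) by (cases "\<Psi> p") auto
qed

lemma prox_set_segment_bound:
  fixes \<Psi> :: "'a::real_inner \<Rightarrow> ereal"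
  assumes cvx: "convex {(x, t::real). \<Psi> x \<le> ereal t}"
    and gamma: "\<gamma> \<ge> 0" and p: "p \<in> prox_set \<gamma> \<Psi> z"
    and pp: "\<Psi> p = ereal pp" and yy: "\<Psi> y = ereal yy" and t: "0 < t" "t \<le> 1"
  shows "\<gamma> * (pp - yy) \<le> inner (p - z) (y - p) + t * (norm (y - p))\<^sup>2 / 2"
proof -
  define w where "w = (1 - t) *\<^sub>R p + t *\<^sub>R y"
  have "ereal \<gamma> * \<Psi> p + ereal ((norm (p - z))\<^sup>2 / 2)
      \<le> ereal \<gamma> * \<Psi> w + ereal ((norm (w - z))\<^sup>2 / 2)"
    using p unfolding prox_set_def by blast
  also have "\<dots> \<le> ereal \<gamma> * ereal ((1 - t) * pp + t * yy) + ereal ((norm (w - z))\<^sup>2 / 2)"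
    unfolding w_def using convex_epigraphD[OF cvx, of p pp y yy t] pp yy t gamma
    by (intro add_right_mono ereal_mult_left_mono) auto
  finally have "\<gamma> * pp + (norm (p - z))\<^sup>2 / 2 \<le> \<gamma> * ((1 - t) * pp + t * yy) + (norm (w - z))\<^sup>2 / 2"
    using pp by simp
  moreover have "(norm (w - z))\<^sup>2
      = (norm (p - z))\<^sup>2 + 2 * t * inner (p - z) (y - p) + t\<^sup>2 * (norm (y - p))\<^sup>2"
    unfolding w_def power2_norm_eq_inner
    by (simp add: inner_commute power2_eq_square algebra_simps)
  ultimately have "t * (\<gamma> * (pp - yy)) \<le> t * (inner (p - z) (y - p) + t * (norm (y - p))\<^sup>2 / 2)"
    by (simp add: algebra_simps power2_eq_square)
  then show ?thesis
    using t by simp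
qed

lemma prox_set_variational_ineq:
  fixes \<Psi> :: "'a::real_inner \<Rightarrow> ereal"
  assumes cvx: "convex {(x, t::real). \<Psi> x \<le> ereal t}"
    and "\<gamma> \<ge> 0" "p \<in> prox_set \<gamma> \<Psi> z" "\<Psi> p = ereal pp" "\<Psi> y = ereal yy"
  shows "\<gamma> * (pp - yy) \<le> inner (p - z) (y - p)"
proof (rule field_le_epsilon)
  fix \<epsilon> :: real
  assume "0 < \<epsilon>"
  define N where "N = (norm (y - p))\<^sup>2"
  define t where "t = min 1 (\<epsilon> / (N + 1))"
  have N: "N \<ge> 0" by (simp add: N_def)
  have t: "0 < t" "t \<le> 1"
    using \<open>0 < \<epsilon>\<close> N by (auto simp: t_def)
  have "t * N \<le> \<epsilon> / (N + 1) * N"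
    using N by (intro mult_right_mono) (auto simp: t_def)
  also have "\<dots> \<le> \<epsilon>"
    using \<open>0 < \<epsilon>\<close> N by (simp add: field_simps)
  finally have "t * N / 2 \<le> \<epsilon>"
    using \<open>0 < \<epsilon>\<close> by linarith
  then show "\<gamma> * (pp - yy) \<le> inner (p - z) (y - p) + \<epsilon>"
    using prox_set_segment_bound[OF assms t] unfolding N_def by linarith
qed

lemma cocoercive_scaled:
  fixes a e :: "'a::real_inner"
  assumes coco: "(norm a)\<^sup>2 \<le> L * inner a e" and L: "L > 0"
    and gamma: "0 \<le> \<gamma>" "\<gamma> \<le> 1 / L"
  shows "\<gamma> * (norm a)\<^sup>2 \<le> inner a e"
proof -
  have "0 \<le> L * inner a e"
    using coco by (meson order_trans zero_le_power2)
  then have ae: "0 \<le> inner a e"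
    using L by (simp add: zero_le_mult_iff)
  have "\<gamma> * (norm a)\<^sup>2 \<le> (\<gamma> * L) * inner a e"
    using mult_left_mono[OF coco gamma(1)] by (simp add: mult.assoc)
  also have "\<dots> \<le> 1 * inner a e"
    using gamma L ae by (intro mult_right_mono) (auto simp: field_simps)
  finally show ?thesis by simp
qed

lemma prox_step_bound:
  fixes x x' u g Fx Fu :: "'a::real_inner"
  assumes gamma: "\<gamma> \<ge> 0"
    and coco: "\<gamma> * (norm (Fx - Fu))\<^sup>2 \<le> inner (Fx - Fu) (x - u)"
    and prox: "\<gamma> * P \<le> inner (x' - (x - \<gamma> *\<^sub>R g)) (u - x')"
  shows "\<gamma> * (inner Fu (x' - u) + P)
    \<le> ((norm (x - u))\<^sup>2 - (norm (x' - u))\<^sup>2) / 2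
       + \<gamma> * inner (x - u) (Fx - g) + \<gamma>\<^sup>2 * (norm (Fx - g))\<^sup>2"
proof -
  define a d e \<omega> where "a = Fx - Fu" and "d = x' - x" and "e = x - u" and "\<omega> = Fx - g"
  \<comment> \<open>The two sides differ by these three terms: Young's inequality for the cross term
      \<open>\<gamma> \<langle>\<omega> - a, d\<rangle>\<close>, the parallelogram bound on \<open>|\<omega> - a|\<^sup>2\<close>, and the cocoercivity slack.\<close>
  have sos: "0 \<le> (norm (d - \<gamma> *\<^sub>R (\<omega> - a)))\<^sup>2 / 2 + \<gamma>\<^sup>2 * (norm (\<omega> + a))\<^sup>2 / 2
                + \<gamma> * (inner a e - \<gamma> * (norm a)\<^sup>2)"
    using gamma coco unfolding a_def e_def by simp
  have "\<gamma> * inner Fu (x' - u) + inner (x' - (x - \<gamma> *\<^sub>R g)) (u - x')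
      + ((norm (d - \<gamma> *\<^sub>R (\<omega> - a)))\<^sup>2 / 2 + \<gamma>\<^sup>2 * (norm (\<omega> + a))\<^sup>2 / 2
         + \<gamma> * (inner a e - \<gamma> * (norm a)\<^sup>2))
    = ((norm (x - u))\<^sup>2 - (norm (x' - u))\<^sup>2) / 2
       + \<gamma> * inner (x - u) (Fx - g) + \<gamma>\<^sup>2 * (norm (Fx - g))\<^sup>2"
    unfolding a_def d_def e_def \<omega>_def power2_norm_eq_inner
    by (simp add: inner_diff_left inner_diff_right inner_add_left inner_add_right
        inner_commute power2_eq_square field_simps)
  then show ?thesis
    using sos prox by (simp add: distrib_left)
qed

lemma average_step_bounds:
  fixes x \<omega> :: "nat \<Rightarrow> 'a::real_inner" and f :: "nat \<Rightarrow> real"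
  assumes K: "K > 0" and gamma: "\<gamma> > 0"
    and step: "\<And>k. k < K \<Longrightarrow> \<gamma> * (inner c (x (Suc k) - u) + f k)
      \<le> ((norm (x k - u))\<^sup>2 - (norm (x (Suc k) - u))\<^sup>2) / 2
         + \<gamma> * inner (x k - u) (\<omega> k) + \<gamma>\<^sup>2 * (norm (\<omega> k))\<^sup>2"
  shows "inner c ((1 / real K) *\<^sub>R (\<Sum>k<K. x (Suc k)) - u) + 1 / real K * (\<Sum>k<K. f k)
    \<le> ((norm (x 0 - u))\<^sup>2 - (norm (x K - u))\<^sup>2) / (2 * \<gamma> * real K)
       + \<gamma> / real K * (\<Sum>k<K. (norm (\<omega> k))\<^sup>2)
       + 1 / real K * (\<Sum>k<K. inner (x k - u) (\<omega> k))"
proof -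
  have "\<gamma> * (\<Sum>k<K. inner c (x (Suc k) - u) + f k)
      \<le> (\<Sum>k<K. ((norm (x k - u))\<^sup>2 - (norm (x (Suc k) - u))\<^sup>2) / 2
         + \<gamma> * inner (x k - u) (\<omega> k) + \<gamma>\<^sup>2 * (norm (\<omega> k))\<^sup>2)"
    unfolding sum_distrib_left by (rule sum_mono) (rule step, simp)
  also have "\<dots> = ((norm (x 0 - u))\<^sup>2 - (norm (x K - u))\<^sup>2) / 2
         + \<gamma> * (\<Sum>k<K. inner (x k - u) (\<omega> k)) + \<gamma>\<^sup>2 * (\<Sum>k<K. (norm (\<omega> k))\<^sup>2)"
    by (simp add: sum.distrib sum_distrib_left sum_divide_distrib[symmetric]
        sum_lessThan_telescope'[of "\<lambda>k. (norm (x k - u))\<^sup>2"])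
  finally have sum_bound: "\<gamma> * (\<Sum>k<K. inner c (x (Suc k) - u) + f k) \<le> \<dots>" .
  define lhs rhs where
    "lhs = inner c ((1 / real K) *\<^sub>R (\<Sum>k<K. x (Suc k)) - u) + 1 / real K * (\<Sum>k<K. f k)" and
    "rhs = ((norm (x 0 - u))\<^sup>2 - (norm (x K - u))\<^sup>2) / (2 * \<gamma> * real K)
       + \<gamma> / real K * (\<Sum>k<K. (norm (\<omega> k))\<^sup>2)
       + 1 / real K * (\<Sum>k<K. inner (x k - u) (\<omega> k))"
  have "(\<Sum>k<K. inner c (x (Suc k) - u))
      = real K * inner c ((1 / real K) *\<^sub>R (\<Sum>k<K. x (Suc k)) - u)"
    using K by (simp add: inner_diff_right inner_sum_right sum_subtractf field_simps)
  then have "\<gamma> * real K * lhs = \<gamma> * (\<Sum>k<K. inner c (x (Suc k) - u) + f k)"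
    using K unfolding lhs_def by (simp add: sum.distrib field_simps)
  moreover have "\<gamma> * real K * rhs = ((norm (x 0 - u))\<^sup>2 - (norm (x K - u))\<^sup>2) / 2
         + \<gamma> * (\<Sum>k<K. inner (x k - u) (\<omega> k)) + \<gamma>\<^sup>2 * (\<Sum>k<K. (norm (\<omega> k))\<^sup>2)"
    using K gamma unfolding rhs_def by (simp add: field_simps power2_eq_square)
  ultimately have "\<gamma> * real K * lhs \<le> \<gamma> * real K * rhs"
    using sum_bound by linarith
  then show ?thesis
    using K gamma unfolding lhs_def rhs_def by (simp add: mult_le_cancel_left_pos)
qed

lemma prox_iterates_average_bound:
  fixes \<Psi> :: "'a::real_inner \<Rightarrow> ereal" and F :: "'a \<Rightarrow> 'a" and x g :: "nat \<Rightarrow> 'a"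
  assumes proper: "\<And>v. \<Psi> v \<noteq> -\<infinity>" "\<Psi> y < \<infinity>"
    and cvx: "convex {(x, t::real). \<Psi> x \<le> ereal t}"
    and gamma: "\<gamma> > 0" and K: "K > 0"
    and prox: "\<And>k. k < K \<Longrightarrow> x (Suc k) \<in> prox_set \<gamma> \<Psi> (x k - \<gamma> *\<^sub>R g k)"
    and coco: "\<And>k. k < K \<Longrightarrow> \<gamma> * (norm (F (x k) - F u))\<^sup>2 \<le> inner (F (x k) - F u) (x k - u)"
  defines "xavg \<equiv> (1 / real K) *\<^sub>R (\<Sum>k<K. x (Suc k))" and "\<omega> \<equiv> \<lambda>k. F (x k) - g k"
  shows "ereal (inner (F u) (xavg - u)) + \<Psi> xavg - \<Psi> u
    \<le> ereal (((norm (x 0 - u))\<^sup>2 - (norm (x K - u))\<^sup>2) / (2 * \<gamma> * real K)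
             + \<gamma> / real K * (\<Sum>k<K. (norm (\<omega> k))\<^sup>2)
             + 1 / real K * (\<Sum>k<K. inner (x k - u) (\<omega> k)))"
proof -
  define \<psi> where "\<psi> v = real_of_ereal (\<Psi> v)" for v
  have finite_iterates: "\<Psi> (x (Suc k)) = ereal (\<psi> (x (Suc k)))" if "k < K" for k
    using prox_set_less_infinity[OF proper gamma prox[OF that]] proper(1) unfolding \<psi>_def
    by (cases "\<Psi> (x (Suc k))") auto
  have "\<Psi> xavg \<le> ereal (\<Sum>k<K. 1 / real K * \<psi> (x (Suc k)))"
    unfolding xavg_def scaleR_sum_right
    by (rule convex_epigraph_sum[OF cvx]) (use K finite_iterates in auto)
  then obtain avg where avg: "\<Psi> xavg = ereal avg" "avg \<le> 1 / real K * (\<Sum>k<K. \<psi> (x (Suc k)))"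
    using proper(1) by (cases "\<Psi> xavg") (auto simp: sum_distrib_left)
  show ?thesis
  proof (cases "\<Psi> u")
    case (real \<psi>u)
    have "\<gamma> * (inner (F u) (x (Suc k) - u) + (\<psi> (x (Suc k)) - \<psi>u))
      \<le> ((norm (x k - u))\<^sup>2 - (norm (x (Suc k) - u))\<^sup>2) / 2
         + \<gamma> * inner (x k - u) (\<omega> k) + \<gamma>\<^sup>2 * (norm (\<omega> k))\<^sup>2" if "k < K" for k
      unfolding \<omega>_def using gamma
      by (intro prox_step_bound coco[OF that] prox_set_variational_ineq[OF cvx _ prox[OF that]]
          finite_iterates[OF that] real) auto
    from average_step_bounds[where f = "\<lambda>k. \<psi> (x (Suc k)) - \<psi>u", OF K gamma this]
    have "inner (F u) (xavg - u) + (1 / real K * (\<Sum>k<K. \<psi> (x (Suc k))) - \<psi>u)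
      \<le> ((norm (x 0 - u))\<^sup>2 - (norm (x K - u))\<^sup>2) / (2 * \<gamma> * real K)
         + \<gamma> / real K * (\<Sum>k<K. (norm (\<omega> k))\<^sup>2)
         + 1 / real K * (\<Sum>k<K. inner (x k - u) (\<omega> k))"
      using K unfolding xavg_def by (simp add: sum_subtractf field_simps)
    then show ?thesis
      using avg real by simp
  qed (use avg proper in auto)
qed

theorem lemmaG1:
  fixes \<Psi> :: "'a::euclidean_space \<Rightarrow> ereal"
    and n :: nat and F :: "'a \<Rightarrow> 'a" and Fi :: "nat \<Rightarrow> 'a \<Rightarrow> 'a"
    and D :: "nat \<Rightarrow> 'b measure" and Fxi :: "'b \<Rightarrow> 'a \<Rightarrow> 'a"
    and xs :: 'a and K :: nat and \<beta> \<gamma> L V \<nu> :: real and lam :: "nat \<Rightarrow> real"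
    and x :: "nat \<Rightarrow> 'a" and h :: "nat \<Rightarrow> nat \<Rightarrow> 'a" and xi :: "nat \<Rightarrow> nat \<Rightarrow> 'b"
  assumes psi: "proper_closed_convex \<Psi>"
    and n_pos: "n \<ge> 1"
    and F_def: "\<And>z. F z = (1 / real n) *\<^sub>R (\<Sum>i<n. Fi i z)"
    and D_prob: "\<And>i. i < n \<Longrightarrow> prob_space (D i)"
    and Fi_def: "\<And>i z. i < n \<Longrightarrow> Fi i z = integral\<^sup>L (D i) (\<lambda>\<xi>. Fxi \<xi> z)"
    and xs_sol: "is_solution F \<Psi> xs"
    and K_pos: "K \<ge> 1"
    and beta: "0 < \<beta>" "\<beta> \<le> 1"
    and ell_pos: "L > 0"
    and gamma: "0 < \<gamma>" "\<gamma> \<le> 1 / L"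
    and V: "V \<ge> (norm (x 0 - xs))\<^sup>2
              + 25600 * \<gamma>\<^sup>2 * (ln (48 * real n * (real K + 1) / \<beta>))\<^sup>2 / (real n)\<^sup>2
                * (\<Sum>i<n. (norm (Fi i xs))\<^sup>2)"
    and mono: "\<forall>z\<in>cball xs (3 * sqrt V). \<forall>y\<in>cball xs (3 * sqrt V).
                 inner (F z - F y) (z - y) \<ge> 0"
    and star_coco: "\<forall>xs'. is_solution F \<Psi> xs' \<longrightarrow>
                 (\<forall>z\<in>cball xs (3 * sqrt V). \<forall>i<n.
                    (norm (Fi i z - Fi i xs'))\<^sup>2 \<le> L * inner (Fi i z - Fi i xs') (z - xs'))"
    and coco: "\<forall>z\<in>cball xs (3 * sqrt V). \<forall>y\<in>cball xs (3 * sqrt V).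
                 (norm (F z - F y))\<^sup>2 \<le> L * inner (F z - F y) (z - y)"
    and h_step: "\<And>i k. i < n \<Longrightarrow>
                 h i (Suc k) = h i k + \<nu> *\<^sub>R clip (Fxi (xi i k) (x k) - h i k) (lam k)"
    and x_step: "\<And>k. x (Suc k) \<in> prox_set \<gamma> \<Psi>
                 (x k - \<gamma> *\<^sub>R ((1 / real n) *\<^sub>R
                   (\<Sum>i<n. h i k + clip (Fxi (xi i k) (x k) - h i k) (lam k))))"
    and x_in: "\<forall>k<K. x k \<in> cball xs (3 * sqrt V)"
  shows "\<forall>u\<in>cball xs (3 * sqrt V).
    (let g = (\<lambda>k. (1 / real n) *\<^sub>R
                   (\<Sum>i<n. h i k + clip (Fxi (xi i k) (x k) - h i k) (lam k)));
         \<omega> = (\<lambda>k. F (x k) - g k);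
         xavg = (1 / real K) *\<^sub>R (\<Sum>k<K. x (Suc k))
     in ereal (inner (F u) (xavg - u)) + \<Psi> xavg - \<Psi> u
        \<le> ereal (((norm (x 0 - u))\<^sup>2 - (norm (x K - u))\<^sup>2) / (2 * \<gamma> * real K)
                 + \<gamma> / real K * (\<Sum>k<K. (norm (\<omega> k))\<^sup>2)
                 + 1 / real K * (\<Sum>k<K. inner (x k - u) (\<omega> k))))"
proof -
  have proper: "\<And>v. \<Psi> v \<noteq> -\<infinity>" and cvx: "convex {(x, t::real). \<Psi> x \<le> ereal t}"
    using psi unfolding proper_closed_convex_def by auto
  obtain y where y: "\<Psi> y < \<infinity>"
    using psi unfolding proper_closed_convex_def by auto
  \<comment> \<open>Only cocoercivity on the ball enters this deterministic bound; the remaining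
      hypotheses serve the high-probability analysis of the noise terms.\<close>
  have coco_scaled: "\<gamma> * (norm (F (x k) - F u))\<^sup>2 \<le> inner (F (x k) - F u) (x k - u)"
    if "u \<in> cball xs (3 * sqrt V)" "k < K" for u k
    using coco x_in that ell_pos gamma by (intro cocoercive_scaled) auto
  show ?thesis
    using K_pos unfolding Let_def
    by (intro ballI prox_iterates_average_bound[where g = "\<lambda>k. (1 / real n) *\<^sub>R
        (\<Sum>i<n. h i k + clip (Fxi (xi i k) (x k) - h i k) (lam k))", OF proper y cvx gamma(1)]
        x_step coco_scaled) auto
qed

end
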